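(* Let $M$ be a Coxeter diagram over $I$ with no subdiagram of type $\mathsf{A}_3$ and let $\Gamma=(V,\tau,* )$ be a geometry over $I$ satisfying Properties (F), (P) and (D). Let $X$ be a flag of $\Gamma$ (possibly empty) and $i\in I\setminus\tau(X)$. Form $\Gamma'=(V\cup\{x\},\tau,* )$ by adding a single new element $x$ of type $i$, incident exactly with the elements of $X$ and with all elements $v\in V$ whose type is different from $i$ and not adjacent to $i$ in $M$ (incidences among elements of $V$ unchanged). Then $\Gamma'$ satisfies Properties (F), (P) and (D), and $X\cup\{x\}$ is a flag of $\Gamma'$.
   Context: A geometry over $I$ is a triple $(V,\tau,* )$ with $\tau:V\to I$ and $*$ a symmetric relation such that elements of equal type are incident iff equal. A flag is a set of pairwise incident elements; the residue of a flag $X$ is the geometry formed by the elements outside $X$ incident with all of $X$. Coxeter diagram $M$ with matrix $(m_{i,j})$; nodes $i\ne j$ are adjacent iff $m_{i,j}\ge3$; a subdiagram of type $\mathsf{A}_3$ is three nodes $i,j,k$ with $m_{i,j}=m_{j,k}=3$, $m_{i,k}=2$. A rank 2 geometry (bipartite incidence graph) is without $k$-gons if it has no cycle of length $2k$. (F) Elements of distinct non-adjacent types are always incident. (P) For adjacent nodes $i,j$ and any flag $X$ of type $J$ with $i,j\notin J$ containing a vertex of every node of $I\setminus\{i,j\}$ adjacent to $i$ or $j$, the restriction of the residue of $X$ to types $i,j$ has no $t$-gons for $t<m_{i,j}$. (D) If $m_{i,j}\ge4$, the restriction of the geometry to types $i$ and $j$ has no digons. *)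

theory Defs
  imports Main "HOL-Library.Extended_Nat"
begin

definition coxeter_diagram :: "'i set \<Rightarrow> ('i \<Rightarrow> 'i \<Rightarrow> enat) \<Rightarrow> bool" where
  "coxeter_diagram I m \<longleftrightarrow>
     (\<forall>i\<in>I. m i i = 1) \<and>
     (\<forall>i\<in>I. \<forall>j\<in>I. m i j = m j i) \<and>
     (\<forall>i\<in>I. \<forall>j\<in>I. i \<noteq> j \<longrightarrow> m i j \<ge> 2)"

definition adjacent :: "('i \<Rightarrow> 'i \<Rightarrow> enat) \<Rightarrow> 'i \<Rightarrow> 'i \<Rightarrow> bool" where
  "adjacent m i j \<longleftrightarrow> i \<noteq> j \<and> m i j \<ge> 3"

definition has_A3_subdiagram :: "'i set \<Rightarrow> ('i \<Rightarrow> 'i \<Rightarrow> enat) \<Rightarrow> bool" where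
  "has_A3_subdiagram I m \<longleftrightarrow>
     (\<exists>i\<in>I. \<exists>j\<in>I. \<exists>k\<in>I. m i j = 3 \<and> m j k = 3 \<and> m i k = 2)"

definition geometry :: "'i set \<Rightarrow> 'a set \<Rightarrow> ('a \<Rightarrow> 'i) \<Rightarrow> ('a \<Rightarrow> 'a \<Rightarrow> bool) \<Rightarrow> bool" where
  "geometry I V tau inc \<longleftrightarrow>
     (\<forall>v\<in>V. tau v \<in> I) \<and>
     (\<forall>u\<in>V. \<forall>v\<in>V. inc u v = inc v u) \<and>
     (\<forall>u\<in>V. \<forall>v\<in>V. tau u = tau v \<longrightarrow> (inc u v \<longleftrightarrow> u = v))"

definition flag :: "'a set \<Rightarrow> ('a \<Rightarrow> 'a \<Rightarrow> bool) \<Rightarrow> 'a set \<Rightarrow> bool" where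
  "flag V inc X \<longleftrightarrow> X \<subseteq> V \<and> (\<forall>u\<in>X. \<forall>v\<in>X. inc u v)"

definition residue :: "'a set \<Rightarrow> ('a \<Rightarrow> 'a \<Rightarrow> bool) \<Rightarrow> 'a set \<Rightarrow> 'a set" where
  "residue V inc X = {v \<in> V. v \<notin> X \<and> (\<forall>y\<in>X. inc v y)}"

definition restrict_types :: "('a \<Rightarrow> 'i) \<Rightarrow> 'a set \<Rightarrow> 'i set \<Rightarrow> 'a set" where
  "restrict_types tau W J = {v \<in> W. tau v \<in> J}"

definition has_gon :: "('a \<Rightarrow> 'a \<Rightarrow> bool) \<Rightarrow> 'a set \<Rightarrow> nat \<Rightarrow> bool" where
  "has_gon inc W k \<longleftrightarrow> k \<ge> 2 \<and>
     (\<exists>c :: nat \<Rightarrow> 'a. inj_on c {..<2*k} \<and> c ` {..<2*k} \<subseteq> W \<and>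
        (\<forall>n<2*k. inc (c n) (c (Suc n mod (2*k)))))"

definition prop_F :: "('i \<Rightarrow> 'i \<Rightarrow> enat) \<Rightarrow> 'a set \<Rightarrow> ('a \<Rightarrow> 'i) \<Rightarrow> ('a \<Rightarrow> 'a \<Rightarrow> bool) \<Rightarrow> bool" where
  "prop_F m V tau inc \<longleftrightarrow>
     (\<forall>u\<in>V. \<forall>v\<in>V. tau u \<noteq> tau v \<and> \<not> adjacent m (tau u) (tau v) \<longrightarrow> inc u v)"

definition prop_P :: "'i set \<Rightarrow> ('i \<Rightarrow> 'i \<Rightarrow> enat) \<Rightarrow> 'a set \<Rightarrow> ('a \<Rightarrow> 'i) \<Rightarrow> ('a \<Rightarrow> 'a \<Rightarrow> bool) \<Rightarrow> bool" where
  "prop_P I m V tau inc \<longleftrightarrow>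
     (\<forall>i\<in>I. \<forall>j\<in>I. \<forall>X. adjacent m i j \<and> flag V inc X \<and>
        i \<notin> tau ` X \<and> j \<notin> tau ` X \<and>
        (\<forall>k\<in>I - {i, j}. adjacent m i k \<or> adjacent m j k \<longrightarrow> (\<exists>y\<in>X. tau y = k)) \<longrightarrow>
        (\<forall>t::nat. 2 \<le> t \<and> enat t < m i j \<longrightarrow>
           \<not> has_gon inc (restrict_types tau (residue V inc X) {i, j}) t))"

definition prop_D :: "'i set \<Rightarrow> ('i \<Rightarrow> 'i \<Rightarrow> enat) \<Rightarrow> 'a set \<Rightarrow> ('a \<Rightarrow> 'i) \<Rightarrow> ('a \<Rightarrow> 'a \<Rightarrow> bool) \<Rightarrow> bool" where
  "prop_D I m V tau inc \<longleftrightarrow>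
     (\<forall>i\<in>I. \<forall>j\<in>I. m i j \<ge> 4 \<longrightarrow> \<not> has_gon inc (restrict_types tau V {i, j}) 2)"

definition ext_inc :: "('i \<Rightarrow> 'i \<Rightarrow> enat) \<Rightarrow> ('a \<Rightarrow> 'i) \<Rightarrow> ('a \<Rightarrow> 'a \<Rightarrow> bool) \<Rightarrow> 'a set \<Rightarrow> 'i \<Rightarrow> 'a \<Rightarrow> 'a \<Rightarrow> 'a \<Rightarrow> bool" where
  "ext_inc m tau inc X i x u v =
     (if u = x \<and> v = x then True
      else if u = x then (v \<in> X \<or> (tau v \<noteq> i \<and> \<not> adjacent m i (tau v)))
      else if v = x then (u \<in> X \<or> (tau u \<noteq> i \<and> \<not> adjacent m i (tau u)))
      else inc u v)"

end

theory Submission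
  imports Defs
begin

text \<open>
  Among the elements whose type is adjacent to \<open>i\<close>, the new element \<open>x\<close> is incident only
  with elements of the flag \<open>X\<close>, and \<open>X\<close> has at most one element of each type. In a gon
  through \<open>x\<close> the two neighbours of \<open>x\<close> would be distinct elements of one type adjacent
  to \<open>i\<close>, both incident with \<open>x\<close>; hence no gon of an adjacent pair of types passes
  through \<open>x\<close>, and such gons of \<open>\<Gamma>'\<close> are gons of \<open>\<Gamma>\<close>. This gives (D) at once, and (P)
  after replacing a flag \<open>Y\<close> by \<open>Y - {x}\<close>: if \<open>x \<in> Y\<close>, each type of a gon in the residue
  of \<open>Y\<close> is carried by two distinct elements incident with \<open>x\<close>.
\<close>

definition gon_cycle :: "('a \<Rightarrow> 'a \<Rightarrow> bool) \<Rightarrow> 'a set \<Rightarrow> nat \<Rightarrow> (nat \<Rightarrow> 'a) \<Rightarrow> bool" where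
  "gon_cycle R W k c \<longleftrightarrow> inj_on c {..<2*k} \<and> c ` {..<2*k} \<subseteq> W \<and>
     (\<forall>n<2*k. R (c n) (c (Suc n mod (2*k))))"

lemma has_gon_iff_gon_cycle: "has_gon R W k \<longleftrightarrow> 2 \<le> k \<and> (\<exists>c. gon_cycle R W k c)"
  by (auto simp: has_gon_def gon_cycle_def)

lemma gon_cycle_mono:
  assumes "gon_cycle R W k c" "c ` {..<2*k} \<subseteq> W'"
    and "\<And>u v. u \<in> c ` {..<2*k} \<Longrightarrow> v \<in> c ` {..<2*k} \<Longrightarrow> R u v \<Longrightarrow> R' u v"
  shows "gon_cycle R' W' k c"
  using assms unfolding gon_cycle_def by auto

lemma has_gon_mono: "has_gon R W k \<Longrightarrow> W \<subseteq> W' \<Longrightarrow> has_gon R W' k"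
  unfolding has_gon_def by blast

lemma restrict_types_mono: "W \<subseteq> W' \<Longrightarrow> restrict_types tau W J \<subseteq> restrict_types tau W' J"
  unfolding restrict_types_def by blast

lemma gon_cycle_neighbour_indices:
  assumes "2 \<le> k" "gon_cycle R W k c" "n < 2*k"
  obtains p s where "p < 2*k" "s < 2*k" "p \<noteq> s" "p \<noteq> n" "s \<noteq> n"
    "R (c p) (c n)" "R (c n) (c s)"
proof -
  have step: "R (c j) (c (Suc j mod (2*k)))" if "j < 2*k" for j
    using assms(2) that unfolding gon_cycle_def by blast
  define p where "p = (if n = 0 then 2*k - 1 else n - 1)"
  define s where "s = Suc n mod (2*k)"
  have "p < 2*k" "Suc p mod (2*k) = n" using assms by (auto simp: p_def)
  moreover have "s < 2*k" "s \<noteq> n" using assms by (auto simp: s_def mod_Suc)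
  moreover have "p \<noteq> s" "p \<noteq> n" using assms by (auto simp: p_def s_def mod_Suc)
  ultimately show thesis using that step[of p] step[OF assms(3)] unfolding s_def by metis
qed

lemma gon_cycle_neighbours:
  assumes "2 \<le> k" "gon_cycle R W k c" "n < 2*k"
  obtains u v where "u \<in> c ` {..<2*k}" "v \<in> c ` {..<2*k}" "u \<noteq> v" "u \<noteq> c n" "v \<noteq> c n"
    "R u (c n)" "R (c n) v"
proof -
  obtain p s where ps: "p < 2*k" "s < 2*k" "p \<noteq> s" "p \<noteq> n" "s \<noteq> n"
    "R (c p) (c n)" "R (c n) (c s)"
    using gon_cycle_neighbour_indices[OF assms] .
  have "inj_on c {..<2*k}" using assms(2) unfolding gon_cycle_def by blast
  then have "c p \<noteq> c s" "c p \<noteq> c n" "c s \<noteq> c n"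
    using ps assms(3) by (auto dest: inj_onD)
  then show thesis using that ps by blast
qed

lemma flag_inj_on_type: "geometry I V tau inc \<Longrightarrow> flag V inc X \<Longrightarrow> inj_on tau X"
  unfolding geometry_def flag_def inj_on_def by blast

lemma geometry_inc_sym: "geometry I V tau inc \<Longrightarrow> u \<in> V \<Longrightarrow> v \<in> V \<Longrightarrow> inc u v \<Longrightarrow> inc v u"
  unfolding geometry_def by blast

lemma geometry_incident_distinct_types:
  "geometry I V tau inc \<Longrightarrow> u \<in> V \<Longrightarrow> v \<in> V \<Longrightarrow> inc u v \<Longrightarrow> u \<noteq> v \<Longrightarrow> tau u \<noteq> tau v"
  unfolding geometry_def by blast

lemma gon_cycle_neighbours_same_type:
  assumes geo: "geometry I V tau inc" and k: "2 \<le> k"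
    and cyc: "gon_cycle inc (restrict_types tau V {a, b}) k c" and n: "n < 2*k"
  obtains u v where "u \<in> c ` {..<2*k}" "v \<in> c ` {..<2*k}" "u \<noteq> v"
    "inc (c n) u" "inc (c n) v" "tau u = tau v" "tau u \<noteq> tau (c n)"
proof -
  obtain u v where uv: "u \<in> c ` {..<2*k}" "v \<in> c ` {..<2*k}" "u \<noteq> v" "u \<noteq> c n" "v \<noteq> c n"
    "inc u (c n)" "inc (c n) v"
    using gon_cycle_neighbours[OF k cyc n] .
  have "c ` {..<2*k} \<subseteq> restrict_types tau V {a, b}"
    using cyc unfolding gon_cycle_def by blast
  then have in_V: "u \<in> V" "v \<in> V" "c n \<in> V"
    and types: "tau u \<in> {a, b}" "tau v \<in> {a, b}" "tau (c n) \<in> {a, b}"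
    using uv n unfolding restrict_types_def by auto
  have "inc (c n) u" using geometry_inc_sym[OF geo] in_V uv(6) by blast
  moreover have "tau u \<noteq> tau (c n)" "tau v \<noteq> tau (c n)"
    using geometry_incident_distinct_types[OF geo] in_V uv by metis+
  moreover from this types have "tau u = tau v" by auto
  ultimately show thesis using that uv by blast
qed

lemma gon_cycle_type_twice:
  assumes geo: "geometry I V tau inc" and k: "2 \<le> k"
    and cyc: "gon_cycle inc (restrict_types tau V {a, b}) k c" and j: "j \<in> {a, b}"
  obtains u v where "u \<in> c ` {..<2*k}" "v \<in> c ` {..<2*k}" "u \<noteq> v" "tau u = j" "tau v = j"
proof -
  have types: "tau (c n) \<in> {a, b}" if "n < 2*k" for n
    using cyc that unfolding gon_cycle_def restrict_types_def by auto
  have nonempty: "0 < 2*k" using k by simp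
  obtain n where n: "n < 2*k" and nj: "tau (c n) \<noteq> j"
  proof (cases "tau (c 0) = j")
    case True
    obtain u v where "u \<in> c ` {..<2*k}" "v \<in> c ` {..<2*k}" "u \<noteq> v"
      "inc (c 0) u" "inc (c 0) v" "tau u = tau v" "tau u \<noteq> tau (c 0)"
      by (rule gon_cycle_neighbours_same_type[OF geo k cyc nonempty])
    with True obtain p where "p < 2*k" "tau (c p) \<noteq> j" by auto
    then show thesis by (rule that)
  next
    case False
    with nonempty show thesis by (rule that)
  qed
  obtain u v where uv: "u \<in> c ` {..<2*k}" "v \<in> c ` {..<2*k}" "u \<noteq> v"
    "inc (c n) u" "inc (c n) v" and same: "tau u = tau v" and other: "tau u \<noteq> tau (c n)"
    by (rule gon_cycle_neighbours_same_type[OF geo k cyc n])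
  from uv(1) obtain p where "p < 2*k" "u = c p" by auto
  then have "tau u \<in> {a, b}" using types by simp
  with types[OF n] other nj j have "tau u = j" by auto
  with same show thesis by (intro that[OF uv(1-3)]) simp_all
qed

lemma adjacent_sym: "coxeter_diagram I m \<Longrightarrow> a \<in> I \<Longrightarrow> b \<in> I \<Longrightarrow> adjacent m a b \<longleftrightarrow> adjacent m b a"
  by (auto simp: coxeter_diagram_def adjacent_def)

locale flag_extension =
  fixes I :: "'i set" and m :: "'i \<Rightarrow> 'i \<Rightarrow> enat"
    and V :: "'a set" and tau :: "'a \<Rightarrow> 'i" and inc :: "'a \<Rightarrow> 'a \<Rightarrow> bool"
    and X :: "'a set" and i :: 'i and x :: 'a
  assumes coxeter: "coxeter_diagram I m"
    and geo: "geometry I V tau inc"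
    and flag_X: "flag V inc X"
    and i_type: "i \<in> I" and i_free: "i \<notin> tau ` X"
    and x_new: "x \<notin> V"
begin

abbreviation "V' \<equiv> V \<union> {x}"
abbreviation "tau' \<equiv> tau(x := i)"
abbreviation "inc' \<equiv> ext_inc m tau inc X i x"

lemma ext_geometry: "geometry I V' tau' inc'"
  using geo flag_X i_type i_free x_new unfolding geometry_def flag_def ext_inc_def by (auto; fastforce)

lemma ext_flag: "flag V' inc' (X \<union> {x})"
  using flag_X x_new by (auto simp: flag_def ext_inc_def)

lemma ext_type_old: "u \<in> V \<Longrightarrow> tau' u = tau u"
  using x_new by auto

lemma ext_inc_old: "u \<in> V \<Longrightarrow> v \<in> V \<Longrightarrow> inc' u v \<longleftrightarrow> inc u v"
  using x_new by (auto simp: ext_inc_def)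

lemma ext_inc_new: "v \<in> V \<Longrightarrow> inc' x v \<longleftrightarrow> v \<in> X \<or> (tau v \<noteq> i \<and> \<not> adjacent m i (tau v))"
  using x_new by (auto simp: ext_inc_def)

lemma ext_inc_new_adjacent_unique:
  assumes "u \<in> V" "v \<in> V" "inc' x u" "inc' x v" "tau u = tau v" "adjacent m i (tau u)"
  shows "u = v"
proof -
  have "u \<in> X" "v \<in> X" using assms ext_inc_new by auto
  then show ?thesis using inj_onD[OF flag_inj_on_type[OF geo flag_X]] assms(5) by blast
qed

lemma ext_gon_cycle_avoids_new:
  assumes ab: "a \<in> I" "b \<in> I" "adjacent m a b" and k: "2 \<le> k"
    and cyc: "gon_cycle inc' (restrict_types tau' V' {a, b}) k c"
  shows "x \<notin> c ` {..<2*k}"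
proof
  assume "x \<in> c ` {..<2*k}"
  then obtain n where n: "n < 2*k" "c n = x" by auto
  obtain u v where uv: "u \<in> c ` {..<2*k}" "v \<in> c ` {..<2*k}" "u \<noteq> v"
    "inc' x u" "inc' x v" and same: "tau' u = tau' v" and other: "tau' u \<noteq> i"
    using gon_cycle_neighbours_same_type[OF ext_geometry k cyc n(1)] n(2) by auto
  have types: "tau' w \<in> {a, b}" "w \<in> V'" if "w \<in> c ` {..<2*k}" for w
    using cyc that unfolding gon_cycle_def restrict_types_def by auto
  have "i \<in> {a, b}" using types(1)[of x] \<open>x \<in> c ` {..<2*k}\<close> by simp
  with ab types(1)[OF uv(1)] other have "adjacent m i (tau' u)"
    using adjacent_sym[OF coxeter] by auto
  moreover have "u \<noteq> x" "v \<noteq> x" using other same by auto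
  then have "u \<in> V" "v \<in> V" using types(2) uv by auto
  ultimately show False
    using ext_inc_new_adjacent_unique uv same ext_type_old by metis
qed

lemma ext_has_gon_old:
  assumes ab: "a \<in> I" "b \<in> I" "adjacent m a b" and W: "W \<subseteq> V'"
    and gon: "has_gon inc' (restrict_types tau' W {a, b}) k"
  shows "has_gon inc (restrict_types tau (W - {x}) {a, b}) k"
proof -
  obtain c where k: "2 \<le> k" and cyc: "gon_cycle inc' (restrict_types tau' W {a, b}) k c"
    using gon has_gon_iff_gon_cycle by blast
  have on_W: "c ` {..<2*k} \<subseteq> restrict_types tau' W {a, b}"
    using cyc unfolding gon_cycle_def by blast
  have "gon_cycle inc' (restrict_types tau' V' {a, b}) k c"
    using on_W restrict_types_mono[OF W] by (intro gon_cycle_mono[OF cyc]) auto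
  then have avoid: "x \<notin> c ` {..<2*k}" by (rule ext_gon_cycle_avoids_new[OF ab k])
  with on_W have on_old: "c ` {..<2*k} \<subseteq> restrict_types tau (W - {x}) {a, b}"
    unfolding restrict_types_def by (auto split: if_splits)
  have "gon_cycle inc (restrict_types tau (W - {x}) {a, b}) k c"
  proof (rule gon_cycle_mono[OF cyc on_old])
    fix u v assume "u \<in> c ` {..<2*k}" "v \<in> c ` {..<2*k}" "inc' u v"
    moreover have "c ` {..<2*k} \<subseteq> V" using on_old W unfolding restrict_types_def by auto
    ultimately show "inc u v" using ext_inc_old by blast
  qed
  then show ?thesis using k has_gon_iff_gon_cycle by blast
qed

lemma ext_prop_F:
  assumes F: "prop_F m V tau inc"
  shows "prop_F m V' tau' inc'"
  unfolding prop_F_def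
proof (intro ballI impI)
  fix u v assume u: "u \<in> V'" and v: "v \<in> V'"
    and nonadj: "tau' u \<noteq> tau' v \<and> \<not> adjacent m (tau' u) (tau' v)"
  consider "u = x" "v \<in> V" | "v = x" "u \<in> V" | "u \<in> V" "v \<in> V"
    using u v nonadj by auto
  then show "inc' u v"
  proof cases
    case 1
    then have "v \<noteq> x" using x_new by blast
    with 1 nonadj have "tau v \<noteq> i" "\<not> adjacent m i (tau v)" by auto
    with 1 show ?thesis using ext_inc_new by blast
  next
    case 2
    then have "u \<noteq> x" using x_new by blast
    with 2 nonadj have "tau u \<noteq> i" "\<not> adjacent m (tau u) i" by auto
    moreover have "tau u \<in> I" using geo 2 unfolding geometry_def by blast
    ultimately have "inc' x u" using 2 ext_inc_new adjacent_sym[OF coxeter i_type] by blast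
    with 2 show ?thesis using x_new by (auto simp: ext_inc_def)
  next
    case 3
    with F nonadj show ?thesis using ext_inc_old ext_type_old unfolding prop_F_def by auto
  qed
qed

lemma ext_prop_D:
  assumes D: "prop_D I m V tau inc"
  shows "prop_D I m V' tau' inc'"
  unfolding prop_D_def
proof (intro ballI impI notI)
  fix a b assume ab: "a \<in> I" "b \<in> I" and m4: "4 \<le> m a b"
    and gon: "has_gon inc' (restrict_types tau' V' {a, b}) 2"
  have "a \<noteq> b" using coxeter ab m4 by (auto simp: coxeter_diagram_def one_enat_def numeral_eq_enat)
  moreover have "3 \<le> m a b" using m4 by (rule order_trans[rotated]) (simp add: numeral_eq_enat)
  ultimately have "adjacent m a b" by (simp add: adjacent_def)
  with ab gon have "has_gon inc (restrict_types tau (V' - {x}) {a, b}) 2"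
    by (intro ext_has_gon_old) auto
  with D ab m4 x_new show False unfolding prop_D_def by auto
qed

lemma ext_residue_not_adjacent:
  assumes x_in: "x \<in> Y" and j: "j \<in> {a, b}"
    and gon: "has_gon inc' (restrict_types tau' (residue V' inc' Y) {a, b}) k"
  shows "\<not> adjacent m i j"
proof
  assume adj: "adjacent m i j"
  obtain c where k: "2 \<le> k" and cyc: "gon_cycle inc' (restrict_types tau' (residue V' inc' Y) {a, b}) k c"
    using gon has_gon_iff_gon_cycle by blast
  have on_res: "c ` {..<2*k} \<subseteq> restrict_types tau' (residue V' inc' Y) {a, b}"
    using cyc unfolding gon_cycle_def by blast
  have "residue V' inc' Y \<subseteq> V'" by (auto simp: residue_def)
  then have "gon_cycle inc' (restrict_types tau' V' {a, b}) k c"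
    using on_res restrict_types_mono by (intro gon_cycle_mono[OF cyc]) blast+
  then obtain u v where uv: "u \<in> c ` {..<2*k}" "v \<in> c ` {..<2*k}" "u \<noteq> v"
    and types: "tau' u = j" "tau' v = j"
    by (rule gon_cycle_type_twice[OF ext_geometry k _ j])
  have res: "w \<in> V'" "w \<notin> Y" "inc' w x" if "w \<in> c ` {..<2*k}" for w
    using on_res that x_in unfolding restrict_types_def residue_def by auto
  have old: "u \<in> V" "v \<in> V" using res(1,2)[OF uv(1)] res(1,2)[OF uv(2)] x_in by auto
  have "inc' x u" "inc' x v"
    using res uv geometry_inc_sym[OF ext_geometry] by blast+
  with old types adj show False
    using ext_inc_new_adjacent_unique uv(3) ext_type_old by metis
qed

lemma ext_flag_remove_new: "flag V' inc' Y \<Longrightarrow> flag V inc (Y - {x})"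
  using ext_inc_old unfolding flag_def by blast

lemma ext_residue_remove_new: "Y \<subseteq> V' \<Longrightarrow> residue V' inc' Y - {x} \<subseteq> residue V inc (Y - {x})"
  using ext_inc_old unfolding residue_def by blast

lemma ext_prop_P:
  assumes P: "prop_P I m V tau inc"
  shows "prop_P I m V' tau' inc'"
  unfolding prop_P_def
proof (intro ballI allI impI notI)
  fix a b Y t
  assume ab: "a \<in> I" "b \<in> I"
    and hyp: "adjacent m a b \<and> flag V' inc' Y \<and> a \<notin> tau' ` Y \<and> b \<notin> tau' ` Y \<and>
      (\<forall>k\<in>I - {a, b}. adjacent m a k \<or> adjacent m b k \<longrightarrow> (\<exists>y\<in>Y. tau' y = k))"
    and t: "2 \<le> t \<and> enat t < m a b"
    and gon: "has_gon inc' (restrict_types tau' (residue V' inc' Y) {a, b}) t"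
  have adj: "adjacent m a b" and flag_Y: "flag V' inc' Y" using hyp by blast+
  have Y: "Y \<subseteq> V'" using flag_Y unfolding flag_def by blast
  define Y' where "Y' = Y - {x}"
  have Y'_old: "Y' \<subseteq> V" using Y by (auto simp: Y'_def)
  have flag_Y': "flag V inc Y'" unfolding Y'_def by (rule ext_flag_remove_new[OF flag_Y])
  have types_Y': "a \<notin> tau ` Y'" "b \<notin> tau ` Y'"
    using hyp Y'_old ext_type_old unfolding Y'_def by (auto simp: image_iff)
  have cover_Y': "\<exists>y\<in>Y'. tau y = k"
    if k: "k \<in> I - {a, b}" and ak: "adjacent m a k \<or> adjacent m b k" for k
  proof -
    obtain y where y: "y \<in> Y" "tau' y = k" using hyp k ak by blast
    have "y \<noteq> x"
    proof
      assume "y = x"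
      with y have "k = i" "x \<in> Y" by auto
      with ak ab adjacent_sym[OF coxeter _ i_type] show False
        using ext_residue_not_adjacent[OF _ _ gon] by blast
    qed
    with y show ?thesis using Y'_old ext_type_old unfolding Y'_def by auto
  qed
  have "has_gon inc (restrict_types tau (residue V' inc' Y - {x}) {a, b}) t"
    by (rule ext_has_gon_old[OF ab adj _ gon]) (auto simp: residue_def)
  then have "has_gon inc (restrict_types tau (residue V inc Y') {a, b}) t"
    unfolding Y'_def using has_gon_mono restrict_types_mono ext_residue_remove_new[OF Y] by metis
  with P ab adj flag_Y' types_Y' cover_Y' t show False unfolding prop_P_def by blast
qed

end

theorem mainTheorem2:
  fixes I :: "'i set" and m :: "'i \<Rightarrow> 'i \<Rightarrow> enat"
    and V :: "'a set" and tau :: "'a \<Rightarrow> 'i" and inc :: "'a \<Rightarrow> 'a \<Rightarrow> bool"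
    and X :: "'a set" and i :: 'i and x :: 'a
  assumes "coxeter_diagram I m"
    and "\<not> has_A3_subdiagram I m"
    and "geometry I V tau inc"
    and "prop_F m V tau inc" and "prop_P I m V tau inc" and "prop_D I m V tau inc"
    and "flag V inc X"
    and "i \<in> I" and "i \<notin> tau ` X"
    and "x \<notin> V"
  shows "geometry I (V \<union> {x}) (tau(x := i)) (ext_inc m tau inc X i x)
       \<and> prop_F m (V \<union> {x}) (tau(x := i)) (ext_inc m tau inc X i x)
       \<and> prop_P I m (V \<union> {x}) (tau(x := i)) (ext_inc m tau inc X i x)
       \<and> prop_D I m (V \<union> {x}) (tau(x := i)) (ext_inc m tau inc X i x)
       \<and> flag (V \<union> {x}) (ext_inc m tau inc X i x) (X \<union> {x})"
proof -
  interpret flag_extension I m V tau inc X i x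
    using assms by unfold_locales
  show ?thesis
    using ext_geometry ext_prop_F[OF assms(4)] ext_prop_P[OF assms(5)] ext_prop_D[OF assms(6)]
      ext_flag by blast
qed

end
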